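(* Let $k$ be an $\mathbf{F}_p$-algebra, $m\in\mathbf{N}\cup\{\infty\}$, $O_m:=\mathbf{F}_p[[\pi]]/(\pi^{m+1})$ and $A:=k[[\pi]]/(\pi^{m+1})$. Let $\iota:\operatorname{HS}^m(k)\to\operatorname{HS}^m(A)$ be induced by the inclusion $k\subset A$, let $J\subset\operatorname{HS}^m(A)$ be the ideal generated by $d^{[n]}\pi^i-\delta_{ni}$ for all $0\le n\le m$ and $i\ge0$, and let $\rho:\operatorname{HS}^m(k)\to\operatorname{HS}^m(A)/J$ be the composite of $\iota$ with the quotient map. Then $\iota$ is injective, $\rho$ is surjective, and there are mutually inverse ring isomorphisms between $\operatorname{HS}^m(A)\otimes_{\operatorname{HS}^m(O_m)}\mathbf{F}_p$ and $\operatorname{HS}^m(A)/J$ compatible with the natural maps from $\operatorname{HS}^m(A)$ to each.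
   Context: For a ring $R$ and $m\in\mathbf{N}\cup\{\infty\}$, $\operatorname{HS}^m(R):=\mathbf{Z}[d^{[n]}a\mid a\in R,0\le n\le m]/\sim$, where $\sim$ is generated by $d^{[n]}(a+b)=d^{[n]}a+d^{[n]}b$, $d^{[n]}(ab)=\sum_{i+j=n}d^{[i]}a\,d^{[j]}b$, and $d^{[0]}1=1$; it is functorial in $R$ via $d^{[n]}a\mapsto d^{[n]}f(a)$. Here $\pi^{\infty+1}:=0$. The map $O_m\to A$ is the inclusion of coefficients $\mathbf{F}_p\subset k$, giving $\operatorname{HS}^m(O_m)\to\operatorname{HS}^m(A)$, and $\operatorname{HS}^m(O_m)\to\mathbf{F}_p$ is the ring homomorphism $d^{[n]}a\mapsto a_n$, where $a=\sum_ia_i\pi^i$ with $a_i\in\mathbf{F}_p$. $\delta_{ni}$ is the Kronecker delta. *)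

theory Defs
  imports "HOL-Algebra.Ring" "HOL-Computational_Algebra.Formal_Power_Series"
          "HOL-Library.Poly_Mapping" "HOL-Library.Extended_Nat"
begin

type_synonym 'v zpoly = "('v \<Rightarrow>\<^sub>0 nat) \<Rightarrow>\<^sub>0 int"

definition Xv :: "'v \<Rightarrow> 'v zpoly" where
  "Xv v = Poly_Mapping.single (Poly_Mapping.single v 1) 1"

definition peval :: "('v \<Rightarrow> 'r::comm_ring_1) \<Rightarrow> 'v zpoly \<Rightarrow> 'r" where
  "peval \<sigma> P = (\<Sum>mo\<in>Poly_Mapping.keys P. of_int (Poly_Mapping.lookup P mo) *
     (\<Prod>v\<in>Poly_Mapping.keys (mo :: 'v \<Rightarrow>\<^sub>0 nat). \<sigma> v ^ Poly_Mapping.lookup mo v))"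

definition gen_ideal :: "'a::comm_ring_1 set \<Rightarrow> 'a set" where
  "gen_ideal S = {x. \<exists>F c. finite F \<and> F \<subseteq> S \<and> x = (\<Sum>s\<in>F. c s * s)}"

text \<open>HS^m(R) is presented as Z[X(n,a)] / HS_ideal m R, where X(n,a) stands for d^[n] a.
  Variables X(n,a) with n > m or a outside the carrier of R are killed by the ideal
  (this is isomorphic to using only the legitimate variables).\<close>
definition HS_rels :: "enat \<Rightarrow> ('a, 'b) ring_scheme \<Rightarrow> (nat \<times> 'a) zpoly set" where
  "HS_rels m R =
     {Xv (n, a \<oplus>\<^bsub>R\<^esub> b) - Xv (n, a) - Xv (n, b) | n a b.
        enat n \<le> m \<and> a \<in> carrier R \<and> b \<in> carrier R}
   \<union> {Xv (n, a \<otimes>\<^bsub>R\<^esub> b) - (\<Sum>i\<le>n. Xv (i, a) * Xv (n - i, b)) | n a b.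
        enat n \<le> m \<and> a \<in> carrier R \<and> b \<in> carrier R}
   \<union> {Xv (0, \<one>\<^bsub>R\<^esub>) - 1}
   \<union> {Xv (n, a) | n a. \<not> (enat n \<le> m \<and> a \<in> carrier R)}"

definition HS_ideal :: "enat \<Rightarrow> ('a, 'b) ring_scheme \<Rightarrow> (nat \<times> 'a) zpoly set" where
  "HS_ideal m R = gen_ideal (HS_rels m R)"

definition hs_map :: "enat \<Rightarrow> ('a, 'b) ring_scheme \<Rightarrow> ('a \<Rightarrow> 'c) \<Rightarrow> (nat \<times> 'a) zpoly \<Rightarrow> (nat \<times> 'c) zpoly" where
  "hs_map m R f = peval (\<lambda>(n, a). if enat n \<le> m \<and> a \<in> carrier R then Xv (n, f a) else 0)"

definition type_ring :: "'a::comm_ring_1 ring" where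
  "type_ring = \<lparr>carrier = UNIV, monoid.mult = (*), one = 1, zero = 0, add = (+)\<rparr>"

definition trunc_fps :: "enat \<Rightarrow> 'a::zero fps \<Rightarrow> 'a fps" where
  "trunc_fps m f = Abs_fps (\<lambda>i. if enat i \<le> m then fps_nth f i else 0)"

text \<open>A = k[[pi]]/(pi^(m+1)), elements represented by truncated power series.\<close>
definition A_ring :: "enat \<Rightarrow> 'k::comm_ring_1 fps ring" where
  "A_ring m = \<lparr>carrier = {f. \<forall>i. \<not> enat i \<le> m \<longrightarrow> fps_nth f i = 0},
               monoid.mult = (\<lambda>f g. trunc_fps m (f * g)), one = 1, zero = 0, add = (+)\<rparr>"

text \<open>O_m = F_p[[pi]]/(pi^(m+1)); F_p is modelled by the integers 0..p-1 with arithmetic mod p,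
  so an element of O_m is an integer power series with coefficients in 0..p-1 vanishing beyond m.\<close>
definition O_ring :: "nat \<Rightarrow> enat \<Rightarrow> int fps ring" where
  "O_ring p m = \<lparr>carrier = {f. \<forall>i. fps_nth f i \<in> {0..<int p} \<and> (\<not> enat i \<le> m \<longrightarrow> fps_nth f i = 0)},
               monoid.mult = (\<lambda>f g. Abs_fps (\<lambda>i. if enat i \<le> m then fps_nth (f * g) i mod int p else 0)),
               one = 1, zero = 0,
               add = (\<lambda>f g. Abs_fps (\<lambda>i. (fps_nth f i + fps_nth g i) mod int p))\<rparr>"

definition O_to_A :: "int fps \<Rightarrow> 'k::comm_ring_1 fps" where
  "O_to_A f = Abs_fps (\<lambda>i. of_int (fps_nth f i))"

text \<open>The ring homomorphism HS^m(O_m) -> F_p, d^[n] a |-> a_n, on representatives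
  (value in 0..p-1 representing an element of F_p).\<close>
definition HS_O_eps :: "nat \<Rightarrow> enat \<Rightarrow> (nat \<times> int fps) zpoly \<Rightarrow> int" where
  "HS_O_eps p m P =
     peval (\<lambda>(n, a). if enat n \<le> m \<and> a \<in> carrier (O_ring p m) then fps_nth a n else 0) P mod int p"

definition J_gens :: "enat \<Rightarrow> (nat \<times> 'k::comm_ring_1 fps) zpoly set" where
  "J_gens m = {Xv (n, trunc_fps m (fps_X ^ i)) - (if n = i then 1 else 0) | n i. enat n \<le> m}"

text \<open>Preimage in Z[X] of J + (relations of HS^m(A)), i.e. the kernel of Z[X] -> HS^m(A)/J.\<close>
definition J_ideal :: "enat \<Rightarrow> (nat \<times> 'k::comm_ring_1 fps) zpoly set" where
  "J_ideal m = gen_ideal (HS_rels m (A_ring m) \<union> J_gens m)"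

end

(*
  Modulo J, the Leibniz rule together with d^[j] pi^i = delta_ji gives d^[n] (pi^i b) = d^[n-i] b,
  hence d^[n] a = sum_(i<=n) d^[n-i] a_i for every a = sum_i a_i pi^i in A: every generator of
  HS^m(A) comes from HS^m(k) modulo J, which is the surjectivity of rho.  For a in O_m the
  coefficients a_i are integers and d^[j] c = c delta_j0 for integers c, so d^[n] a = a_n modulo J,
  and reducing a_n mod p costs nothing because p = 0 in k.  Conversely the generators
  d^[n] pi^i - delta_ni of J are images of elements of HS^m(O_m) with augmentation delta_ni, so any
  ring map killing the kernel of the augmentation kills J.  Injectivity of iota holds because
  a |-> a_0 is a ring map A -> k retracting k -> A, and HS^m is functorial.
*)
theory Submission
  imports Defs
begin

section \<open>Evaluation of integer polynomials\<close>

definition monomial_eval :: "('v \<Rightarrow> 'r::comm_ring_1) \<Rightarrow> ('v \<Rightarrow>\<^sub>0 nat) \<Rightarrow> 'r" where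
  "monomial_eval \<sigma> mo = (\<Prod>v\<in>Poly_Mapping.keys mo. \<sigma> v ^ Poly_Mapping.lookup mo v)"

lemma peval_eq_sum_monomial_eval:
  assumes "finite S" "Poly_Mapping.keys P \<subseteq> S"
  shows "peval \<sigma> P = (\<Sum>mo\<in>S. of_int (Poly_Mapping.lookup P mo) * monomial_eval \<sigma> mo)"
  unfolding peval_def monomial_eval_def
  by (rule sum.mono_neutral_left) (use assms in \<open>auto simp: in_keys_iff\<close>)

lemma monomial_eval_eq_prod:
  assumes "finite S" "Poly_Mapping.keys mo \<subseteq> S"
  shows "monomial_eval \<sigma> mo = (\<Prod>v\<in>S. \<sigma> v ^ Poly_Mapping.lookup mo v)"
  unfolding monomial_eval_def
  by (rule prod.mono_neutral_left) (use assms in \<open>auto simp: in_keys_iff\<close>)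

lemma monomial_eval_add: "monomial_eval \<sigma> (a + b) = monomial_eval \<sigma> a * monomial_eval \<sigma> b"
proof -
  let ?S = "Poly_Mapping.keys a \<union> Poly_Mapping.keys b"
  have "monomial_eval \<sigma> (a + b) = (\<Prod>v\<in>?S. \<sigma> v ^ Poly_Mapping.lookup (a + b) v)"
    by (rule monomial_eval_eq_prod) (use keys_add[of a b] in auto)
  also have "\<dots> = (\<Prod>v\<in>?S. \<sigma> v ^ Poly_Mapping.lookup a v) * (\<Prod>v\<in>?S. \<sigma> v ^ Poly_Mapping.lookup b v)"
    by (simp add: lookup_add power_add prod.distrib)
  also have "\<dots> = monomial_eval \<sigma> a * monomial_eval \<sigma> b"
    by (subst (1 2) monomial_eval_eq_prod) auto
  finally show ?thesis .
qed

lemma monomial_eval_Xv_power: "monomial_eval Xv mo = Poly_Mapping.single mo 1"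
proof -
  have single_prod: "(\<Prod>v\<in>F. Poly_Mapping.single (g v) (1::int)) = Poly_Mapping.single (\<Sum>v\<in>F. g v) 1"
    for F and g :: "'v \<Rightarrow> 'v \<Rightarrow>\<^sub>0 nat"
    by (induction F rule: infinite_finite_induct) (auto simp: mult_single)
  have Xv_power: "Xv v ^ k = Poly_Mapping.single (Poly_Mapping.single v k) 1" for v :: 'v and k
    by (induction k) (auto simp: Xv_def mult_single single_add[symmetric])
  have "(\<Sum>v\<in>Poly_Mapping.keys mo. Poly_Mapping.single v (Poly_Mapping.lookup mo v)) = mo"
    by (rule poly_mapping_eqI) (auto simp: lookup_sum lookup_single when_def in_keys_iff)
  then show ?thesis
    by (simp add: monomial_eval_def Xv_power single_prod)
qed

lemma peval_single: "peval \<sigma> (Poly_Mapping.single mo c) = of_int c * monomial_eval \<sigma> mo"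
  by (simp add: peval_def monomial_eval_def)

lemma peval_zero [simp]: "peval \<sigma> 0 = 0"
  by (simp add: peval_def)

lemma peval_one [simp]: "peval \<sigma> 1 = 1"
  using peval_single[of \<sigma> 0 1] by (simp add: monomial_eval_def)

lemma peval_Xv [simp]: "peval \<sigma> (Xv v) = \<sigma> v"
  by (simp add: Xv_def peval_single monomial_eval_def)

lemma peval_add: "peval \<sigma> (P + Q) = peval \<sigma> P + peval \<sigma> Q"
proof -
  let ?S = "Poly_Mapping.keys P \<union> Poly_Mapping.keys Q"
  let ?e = "\<lambda>R mo. of_int (Poly_Mapping.lookup R mo) * monomial_eval \<sigma> mo"
  have "peval \<sigma> (P + Q) = (\<Sum>mo\<in>?S. ?e (P + Q) mo)"
    by (rule peval_eq_sum_monomial_eval) (use keys_add[of P Q] in auto)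
  also have "\<dots> = (\<Sum>mo\<in>?S. ?e P mo) + (\<Sum>mo\<in>?S. ?e Q mo)"
    by (simp add: lookup_add distrib_right sum.distrib)
  also have "\<dots> = peval \<sigma> P + peval \<sigma> Q"
    by (subst (1 2) peval_eq_sum_monomial_eval) auto
  finally show ?thesis .
qed

lemma peval_diff: "peval \<sigma> (P - Q) = peval \<sigma> P - peval \<sigma> Q"
  using peval_add[of \<sigma> "P - Q" Q] by (simp add: eq_diff_eq)

lemma peval_sum: "peval \<sigma> (\<Sum>i\<in>F. f i) = (\<Sum>i\<in>F. peval \<sigma> (f i))"
  by (induction F rule: infinite_finite_induct) (auto simp: peval_add)

lemma peval_mult: "peval \<sigma> (P * Q) = peval \<sigma> P * peval \<sigma> Q"
proof -
  have monomial: "peval \<sigma> (frag_of mo * Q) = peval \<sigma> (frag_of mo) * peval \<sigma> Q" for mo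
    using subset_UNIV
  proof (induction Q rule: frag_induction)
    case (one mo')
    then show ?case by (simp add: mult_single peval_single monomial_eval_add)
  next
    case (diff a b)
    then show ?case by (simp add: right_diff_distrib peval_diff)
  qed simp
  show ?thesis
    using subset_UNIV
  proof (induction P rule: frag_induction)
    case (diff a b)
    then show ?case by (simp add: left_diff_distrib peval_diff)
  qed (simp_all add: monomial)
qed

lemma zpoly_induct [case_names one var diff mult]:
  assumes one: "Pr 1" and var: "\<And>v. Pr (Xv v)"
    and diff: "\<And>a b. Pr a \<Longrightarrow> Pr b \<Longrightarrow> Pr (a - b)"
    and mult: "\<And>a b. Pr a \<Longrightarrow> Pr b \<Longrightarrow> Pr (a * b)"
  shows "Pr (P :: 'v zpoly)"
proof -
  have power: "Pr (a ^ k)" if "Pr a" for a k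
    using that by (induction k) (auto intro: one mult)
  have prod: "Pr (\<Prod>v\<in>F. f v)" if "\<And>v. Pr (f v)" for F and f :: "'v \<Rightarrow> 'v zpoly"
    using that by (induction F rule: infinite_finite_induct) (auto intro: one mult)
  show ?thesis
    using subset_UNIV
  proof (induction P rule: frag_induction)
    case zero
    show ?case using diff[OF one one] by simp
  next
    case (one mo)
    show ?case
      unfolding monomial_eval_Xv_power[symmetric] monomial_eval_def
      by (intro prod power var)
  qed (rule diff)
qed

lemma peval_Xv_self [simp]: "peval Xv P = P"
  by (induction P rule: zpoly_induct) (simp_all add: peval_diff peval_mult)

lemma peval_peval: "peval \<tau> (peval \<sigma> P) = peval (\<lambda>v. peval \<tau> (\<sigma> v)) P"
  by (induction P rule: zpoly_induct) (simp_all add: peval_diff peval_mult)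

lemma peval_of_int_comp: "peval (\<lambda>v. of_int (\<sigma> v)) P = of_int (peval \<sigma> P)"
  by (induction P rule: zpoly_induct) (simp_all add: peval_diff peval_mult)

section \<open>Generated ideals and congruences\<close>

interpretation module_over_itself: module "(*) :: 'a::comm_ring_1 \<Rightarrow> 'a \<Rightarrow> 'a"
  by unfold_locales (simp_all add: algebra_simps)

lemma gen_ideal_eq_span: "gen_ideal S = module_over_itself.span S"
  unfolding gen_ideal_def module_over_itself.span_explicit by blast

lemma peval_gen_ideal:
  assumes "P \<in> gen_ideal S" and "\<And>s. s \<in> S \<Longrightarrow> peval \<sigma> s \<in> gen_ideal T"
  shows "peval \<sigma> P \<in> gen_ideal T"
proof -
  obtain F c where "finite F" "F \<subseteq> S" "P = (\<Sum>s\<in>F. c s * s)"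
    using assms(1) unfolding gen_ideal_def by blast
  then show ?thesis
    using assms(2) unfolding gen_ideal_eq_span
    by (auto simp: peval_sum peval_mult intro!: module_over_itself.span_sum module_over_itself.span_scale)
qed

lemma peval_gen_ideal_eq_0:
  assumes "P \<in> gen_ideal S" and "\<And>s. s \<in> S \<Longrightarrow> peval \<sigma> s = 0"
  shows "peval \<sigma> P = 0"
  using peval_gen_ideal[of P S \<sigma> "{}"] assms
  by (simp add: gen_ideal_eq_span module_over_itself.span_zero module_over_itself.span_empty)

definition cong_gen :: "'a::comm_ring_1 set \<Rightarrow> 'a \<Rightarrow> 'a \<Rightarrow> bool" where
  "cong_gen S x y \<longleftrightarrow> x - y \<in> gen_ideal S"

lemma cong_gen_base: "x - y \<in> S \<Longrightarrow> cong_gen S x y"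
  by (simp add: cong_gen_def gen_ideal_eq_span module_over_itself.span_base)

lemma cong_gen_refl [simp]: "cong_gen S x x"
  by (simp add: cong_gen_def gen_ideal_eq_span module_over_itself.span_zero)

lemma cong_gen_sym: "cong_gen S x y \<Longrightarrow> cong_gen S y x"
  unfolding cong_gen_def gen_ideal_eq_span using module_over_itself.span_neg by fastforce

lemma cong_gen_trans [trans]: "cong_gen S x y \<Longrightarrow> cong_gen S y z \<Longrightarrow> cong_gen S x z"
  unfolding cong_gen_def gen_ideal_eq_span using module_over_itself.span_add by fastforce

lemma cong_gen_add: "cong_gen S x y \<Longrightarrow> cong_gen S x' y' \<Longrightarrow> cong_gen S (x + x') (y + y')"
  unfolding cong_gen_def gen_ideal_eq_span using module_over_itself.span_add
  by (fastforce simp: algebra_simps)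

lemma cong_gen_diff: "cong_gen S x y \<Longrightarrow> cong_gen S x' y' \<Longrightarrow> cong_gen S (x - x') (y - y')"
  unfolding cong_gen_def gen_ideal_eq_span using module_over_itself.span_diff
  by (fastforce simp: algebra_simps)

lemma cong_gen_mult: "cong_gen S x y \<Longrightarrow> cong_gen S x' y' \<Longrightarrow> cong_gen S (x * x') (y * y')"
proof -
  assume "cong_gen S x y" "cong_gen S x' y'"
  moreover have "x * x' - y * y' = x * (x' - y') + y' * (x - y)"
    by (simp add: algebra_simps)
  ultimately show ?thesis
    unfolding cong_gen_def gen_ideal_eq_span
    by (simp add: module_over_itself.span_add module_over_itself.span_scale)
qed

lemma cong_gen_sum: "(\<And>i. i \<in> F \<Longrightarrow> cong_gen S (f i) (g i)) \<Longrightarrow> cong_gen S (\<Sum>i\<in>F. f i) (\<Sum>i\<in>F. g i)"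
  by (induction F rule: infinite_finite_induct) (auto intro: cong_gen_add)

lemma cong_gen_peval:
  assumes "\<And>v. cong_gen S (\<sigma> v) (\<sigma>' v)"
  shows "cong_gen S (peval \<sigma> P) (peval \<sigma>' P)"
  by (induction P rule: zpoly_induct)
    (simp_all add: assms peval_diff peval_mult cong_gen_diff cong_gen_mult)

section \<open>Functoriality of HS^m\<close>

lemma hs_map_Xv [simp]:
  "hs_map m R f (Xv (n, a)) = (if enat n \<le> m \<and> a \<in> carrier R then Xv (n, f a) else 0)"
  by (simp add: hs_map_def)

lemma HS_rel_out_of_range: "\<not> (enat n \<le> m \<and> a \<in> carrier R) \<Longrightarrow> Xv (n, a) \<in> HS_rels m R"
  unfolding HS_rels_def by blast

lemma HS_rel_add:
  "enat n \<le> m \<Longrightarrow> a \<in> carrier R \<Longrightarrow> b \<in> carrier R \<Longrightarrow>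
    Xv (n, a \<oplus>\<^bsub>R\<^esub> b) - Xv (n, a) - Xv (n, b) \<in> HS_rels m R"
  unfolding HS_rels_def by blast

lemma HS_rel_mult:
  "enat n \<le> m \<Longrightarrow> a \<in> carrier R \<Longrightarrow> b \<in> carrier R \<Longrightarrow>
    Xv (n, a \<otimes>\<^bsub>R\<^esub> b) - (\<Sum>i\<le>n. Xv (i, a) * Xv (n - i, b)) \<in> HS_rels m R"
  unfolding HS_rels_def by blast

lemma hs_map_hs_map:
  assumes "\<And>a. a \<in> carrier R \<Longrightarrow> f a \<in> carrier S"
  shows "hs_map m S g (hs_map m R f P) = hs_map m R (g \<circ> f) P"
  unfolding hs_map_def peval_peval
  by (rule arg_cong[where f = "\<lambda>\<sigma>. peval \<sigma> P"]) (auto simp: assms fun_eq_iff)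

lemma hs_map_id_cong: "cong_gen (HS_rels m R) P (hs_map m R id P)"
proof -
  have "cong_gen (HS_rels m R) (Xv (n, a)) (hs_map m R id (Xv (n, a)))" for n a
    by (auto simp: HS_rel_out_of_range intro: cong_gen_base)
  then have "cong_gen (HS_rels m R) (peval Xv P) (peval (\<lambda>v. hs_map m R id (Xv v)) P)"
    by (intro cong_gen_peval) (simp add: split_paired_all)
  then show ?thesis
    by (simp add: hs_map_def flip: peval_peval)
qed

lemma enat_le_trans: "i \<le> n \<Longrightarrow> enat n \<le> m \<Longrightarrow> enat i \<le> m"
  by (meson enat_ord_simps(1) order_trans)

lemma hs_map_HS_ideal:
  assumes hom: "f \<in> ring_hom R S"
    and closed: "\<And>a b. a \<in> carrier R \<Longrightarrow> b \<in> carrier R \<Longrightarrow>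
                    a \<oplus>\<^bsub>R\<^esub> b \<in> carrier R \<and> a \<otimes>\<^bsub>R\<^esub> b \<in> carrier R"
    and one_closed: "\<one>\<^bsub>R\<^esub> \<in> carrier R"
    and P: "P \<in> HS_ideal m R"
  shows "hs_map m R f P \<in> HS_ideal m S"
proof -
  have f_closed: "f a \<in> carrier S" if "a \<in> carrier R" for a
    using hom that by (rule ring_hom_memE)
  have "hs_map m R f s \<in> HS_rels m S \<union> {0}" if "s \<in> HS_rels m R" for s
  proof -
    from that consider
      (add) n a b where "s = Xv (n, a \<oplus>\<^bsub>R\<^esub> b) - Xv (n, a) - Xv (n, b)"
        "enat n \<le> m" "a \<in> carrier R" "b \<in> carrier R"
    | (mult) n a b where "s = Xv (n, a \<otimes>\<^bsub>R\<^esub> b) - (\<Sum>i\<le>n. Xv (i, a) * Xv (n - i, b))"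
        "enat n \<le> m" "a \<in> carrier R" "b \<in> carrier R"
    | (one) "s = Xv (0, \<one>\<^bsub>R\<^esub>) - 1"
    | (out_of_range) n a where "s = Xv (n, a)" "\<not> (enat n \<le> m \<and> a \<in> carrier R)"
      unfolding HS_rels_def by blast
    then show ?thesis
    proof cases
      case (mult n a b)
      have "enat i \<le> m" if "i \<le> n" for i
        using that mult(2) by (rule enat_le_trans)
      then have "hs_map m R f s = Xv (n, f a \<otimes>\<^bsub>S\<^esub> f b) - (\<Sum>i\<le>n. Xv (i, f a) * Xv (n - i, f b))"
        using mult hom closed
        by (simp add: hs_map_def peval_diff peval_sum peval_mult ring_hom_mult)
      then show ?thesis
        using mult f_closed by (simp add: HS_rel_mult)
    next
      case (add n a b)
      then have "hs_map m R f s = Xv (n, f a \<oplus>\<^bsub>S\<^esub> f b) - Xv (n, f a) - Xv (n, f b)"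
        using hom closed by (simp add: hs_map_def peval_diff ring_hom_add)
      then show ?thesis
        using add f_closed by (simp add: HS_rel_add)
    next
      case one
      then have "hs_map m R f s = Xv (0, \<one>\<^bsub>S\<^esub>) - 1"
        using hom one_closed by (simp add: hs_map_def peval_diff ring_hom_one zero_enat_def[symmetric])
      then show ?thesis
        unfolding HS_rels_def by blast
    next
      case (out_of_range n a)
      then show ?thesis by (cases "enat n \<le> m") simp_all
    qed
  qed
  then have "hs_map m R f s \<in> gen_ideal (HS_rels m S)" if "s \<in> HS_rels m R" for s
    using that unfolding gen_ideal_eq_span
    by (metis Un_iff singletonD module_over_itself.span_base module_over_itself.span_zero)
  with P show ?thesis
    unfolding HS_ideal_def hs_map_def by (rule peval_gen_ideal)
qed

section \<open>The truncated power series ring A\<close>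

lemma type_ring_simps [simp]:
  "carrier (type_ring :: 'a::comm_ring_1 ring) = UNIV"
  "a \<oplus>\<^bsub>(type_ring :: 'a ring)\<^esub> b = a + b"
  "a \<otimes>\<^bsub>(type_ring :: 'a ring)\<^esub> b = a * b"
  "\<one>\<^bsub>(type_ring :: 'a ring)\<^esub> = 1"
  by (simp_all add: type_ring_def)

lemma A_ring_simps [simp]:
  "a \<oplus>\<^bsub>A_ring m\<^esub> b = a + b"
  "a \<otimes>\<^bsub>A_ring m\<^esub> b = trunc_fps m (a * b)"
  "\<one>\<^bsub>A_ring m\<^esub> = 1"
  by (simp_all add: A_ring_def)

lemma trunc_fps_nth [simp]: "fps_nth (trunc_fps m f) i = (if enat i \<le> m then fps_nth f i else 0)"
  by (simp add: trunc_fps_def)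

lemma A_ring_carrier_iff: "f \<in> carrier (A_ring m) \<longleftrightarrow> trunc_fps m f = f"
  by (simp add: A_ring_def fps_eq_iff)

lemma trunc_fps_in_A_ring [simp]: "trunc_fps m f \<in> carrier (A_ring m)"
  by (simp add: A_ring_carrier_iff fps_eq_iff)

lemma trunc_fps_add: "trunc_fps m (f + g) = trunc_fps m f + trunc_fps m (g :: 'a::monoid_add fps)"
  by (simp add: fps_eq_iff)

lemma trunc_fps_zero [simp]: "trunc_fps m 0 = 0"
  by (simp add: fps_eq_iff)

lemma trunc_fps_one [simp]: "trunc_fps m 1 = 1"
  by (simp add: fps_eq_iff zero_enat_def[symmetric])

lemma trunc_fps_fps_const [simp]: "trunc_fps m (fps_const c) = fps_const c"
  by (simp add: fps_eq_iff zero_enat_def[symmetric])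

lemma trunc_fps_mult_trunc:
  "trunc_fps m (trunc_fps m f * trunc_fps m g) = trunc_fps m (f * g :: 'a::semiring_0 fps)"
proof (rule fps_ext)
  fix i
  have "enat j \<le> m \<and> enat (i - j) \<le> m" if "enat i \<le> m" "j \<le> i" for j
    using that enat_le_trans[of _ i m] by simp
  then show "fps_nth (trunc_fps m (trunc_fps m f * trunc_fps m g)) i = fps_nth (trunc_fps m (f * g)) i"
    by (auto simp: fps_mult_nth intro!: sum.cong)
qed

lemma A_ring_closed:
  "a \<in> carrier (A_ring m) \<Longrightarrow> b \<in> carrier (A_ring m) \<Longrightarrow> a + b \<in> carrier (A_ring m)"
  "1 \<in> carrier (A_ring m)"
  using trunc_fps_add[of m a b] trunc_fps_fps_const[of m 1] by (simp_all add: A_ring_carrier_iff)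

lemma fps_nth_0_ring_hom: "(\<lambda>f. fps_nth f 0) \<in> ring_hom (A_ring m) (type_ring :: 'k::comm_ring_1 ring)"
  by (rule ring_hom_memI) (simp_all add: zero_enat_def[symmetric])

lemma hs_map_fps_const_injective:
  assumes "hs_map m type_ring fps_const P \<in> HS_ideal m (A_ring m :: 'k::comm_ring_1 fps ring)"
  shows "P \<in> HS_ideal m (type_ring :: 'k ring)"
proof -
  have "hs_map m (A_ring m) (\<lambda>f. fps_nth f 0) (hs_map m type_ring fps_const P)
      \<in> HS_ideal m (type_ring :: 'k ring)"
    by (rule hs_map_HS_ideal[OF fps_nth_0_ring_hom]) (simp_all add: A_ring_closed assms)
  moreover have "hs_map m (A_ring m) (\<lambda>f. fps_nth f 0) (hs_map m type_ring fps_const P)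
      = hs_map m type_ring id P"
    by (simp add: hs_map_hs_map comp_def id_def[symmetric] A_ring_carrier_iff)
  ultimately show ?thesis
    using hs_map_id_cong[of m type_ring P] module_over_itself.span_add
    unfolding cong_gen_def HS_ideal_def gen_ideal_eq_span by fastforce
qed

section \<open>Congruences modulo J\<close>

abbreviation J_rels :: "enat \<Rightarrow> (nat \<times> 'k::comm_ring_1 fps) zpoly set" where
  "J_rels m \<equiv> HS_rels m (A_ring m) \<union> J_gens m"

abbreviation J_cong :: "enat \<Rightarrow> (nat \<times> 'k::comm_ring_1 fps) zpoly \<Rightarrow> (nat \<times> 'k fps) zpoly \<Rightarrow> bool" where
  "J_cong m \<equiv> cong_gen (J_rels m)"

lemma J_cong_Xv_out_of_range: "\<not> (enat n \<le> m \<and> a \<in> carrier (A_ring m)) \<Longrightarrow> J_cong m (Xv (n, a)) 0"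
  by (simp add: cong_gen_base HS_rel_out_of_range)

(* The congruences are stated for truncations of arbitrary power series, so that sums and
   products in A need no carrier side conditions. *)
lemma J_cong_Xv_trunc_add:
  "J_cong m (Xv (n, trunc_fps m (f + g))) (Xv (n, trunc_fps m f) + Xv (n, trunc_fps m g))"
proof (cases "enat n \<le> m")
  case True
  then have "Xv (n, trunc_fps m f \<oplus>\<^bsub>A_ring m\<^esub> trunc_fps m g) - Xv (n, trunc_fps m f) - Xv (n, trunc_fps m g)
      \<in> J_rels m"
    by (intro UnI1 HS_rel_add) simp_all
  then show ?thesis
    by (intro cong_gen_base) (simp add: trunc_fps_add diff_diff_eq)
next
  case False
  then have "J_cong m (Xv (n, trunc_fps m f) + Xv (n, trunc_fps m g)) (0 + 0)"
    by (intro cong_gen_add J_cong_Xv_out_of_range) simp_all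
  moreover have "J_cong m (Xv (n, trunc_fps m (f + g))) 0"
    using False by (simp add: J_cong_Xv_out_of_range)
  ultimately show ?thesis
    using cong_gen_trans cong_gen_sym by fastforce
qed

lemma J_cong_Xv_zero: "J_cong m (Xv (n, 0)) 0"
proof -
  have "J_cong m (Xv (n, 0)) (Xv (n, 0) + Xv (n, 0))"
    using J_cong_Xv_trunc_add[of m n 0 0] by simp
  from cong_gen_diff[OF this cong_gen_refl[of _ "Xv (n, 0)"]] have "J_cong m 0 (Xv (n, 0))"
    by simp
  then show ?thesis
    by (rule cong_gen_sym)
qed

lemma J_cong_Xv_trunc_sum:
  "J_cong m (Xv (n, trunc_fps m (\<Sum>i\<in>F. f i))) (\<Sum>i\<in>F. Xv (n, trunc_fps m (f i)))"
proof (induction F rule: infinite_finite_induct)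
  case (insert i F)
  then show ?case
    using cong_gen_trans[OF J_cong_Xv_trunc_add cong_gen_add[OF cong_gen_refl insert.IH]] by simp
qed (simp_all add: J_cong_Xv_zero)

lemma J_cong_Xv_trunc_mult:
  assumes "enat n \<le> m"
  shows "J_cong m (Xv (n, trunc_fps m (f * g)))
           (\<Sum>i\<le>n. Xv (i, trunc_fps m f) * Xv (n - i, trunc_fps m g))"
proof -
  have "Xv (n, trunc_fps m f \<otimes>\<^bsub>A_ring m\<^esub> trunc_fps m g)
      - (\<Sum>i\<le>n. Xv (i, trunc_fps m f) * Xv (n - i, trunc_fps m g)) \<in> J_rels m"
    using assms by (intro UnI1 HS_rel_mult) simp_all
  then show ?thesis
    by (intro cong_gen_base) (simp add: trunc_fps_mult_trunc)
qed

lemma J_cong_Xv_trunc_X_power: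
  "enat n \<le> m \<Longrightarrow> J_cong m (Xv (n, trunc_fps m (fps_X ^ i))) (if n = i then 1 else 0)"
  unfolding J_gens_def by (intro cong_gen_base) blast

lemma J_cong_Xv_trunc_X_power_mult:
  assumes n: "enat n \<le> m"
  shows "J_cong m (Xv (n, trunc_fps m (fps_X ^ i * f))) (if i \<le> n then Xv (n - i, trunc_fps m f) else 0)"
proof -
  have "J_cong m (Xv (n, trunc_fps m (fps_X ^ i * f)))
      (\<Sum>j\<le>n. Xv (j, trunc_fps m (fps_X ^ i)) * Xv (n - j, trunc_fps m f))"
    using n by (rule J_cong_Xv_trunc_mult)
  also have "J_cong m \<dots> (\<Sum>j\<le>n. (if j = i then 1 else 0) * Xv (n - j, trunc_fps m f))"
    using n enat_le_trans[of _ n m]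
    by (intro cong_gen_sum cong_gen_mult J_cong_Xv_trunc_X_power cong_gen_refl) auto
  also have "(\<Sum>j\<le>n. (if j = i then 1 else 0) * Xv (n - j, trunc_fps m f))
      = (if i \<le> n then Xv (n - i, trunc_fps m f) else 0)"
    by (simp add: if_distrib[of "\<lambda>c. c * _"] cong: if_cong)
  finally show ?thesis .
qed

lemma fps_taylor_expansion:
  "f = (\<Sum>i\<le>n. fps_X ^ i * fps_const (fps_nth f i)) + fps_X ^ Suc n * fps_shift (Suc n) f"
proof (rule fps_ext)
  fix k
  have "fps_nth (\<Sum>i\<le>n. fps_X ^ i * fps_const (fps_nth f i)) k = (if k \<le> n then fps_nth f k else 0)"
    by (simp add: fps_sum_nth fps_X_power_mult_nth if_distrib[of "\<lambda>c. c * _"] cong: if_cong)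
  then show "fps_nth f k =
      fps_nth ((\<Sum>i\<le>n. fps_X ^ i * fps_const (fps_nth f i)) + fps_X ^ Suc n * fps_shift (Suc n) f) k"
    by (simp add: fps_X_power_mult_nth del: power_Suc)
qed

lemma J_cong_Xv_trunc_coeffs:
  assumes n: "enat n \<le> m"
  shows "J_cong m (Xv (n, trunc_fps m f)) (\<Sum>i\<le>n. Xv (n - i, fps_const (fps_nth f i)))"
proof -
  let ?tail = "fps_X ^ Suc n * fps_shift (Suc n) f"
  have "J_cong m (Xv (n, trunc_fps m f))
      (Xv (n, trunc_fps m (\<Sum>i\<le>n. fps_X ^ i * fps_const (fps_nth f i))) + Xv (n, trunc_fps m ?tail))"
    by (subst (1) fps_taylor_expansion[of f n]) (rule J_cong_Xv_trunc_add)
  also have "J_cong m \<dots> ((\<Sum>i\<le>n. Xv (n, trunc_fps m (fps_X ^ i * fps_const (fps_nth f i)))) + 0)"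
    using J_cong_Xv_trunc_X_power_mult[OF n, of "Suc n"]
    by (intro cong_gen_add J_cong_Xv_trunc_sum) simp
  also have "J_cong m \<dots> ((\<Sum>i\<le>n. Xv (n - i, fps_const (fps_nth f i))) + 0)"
  proof (intro cong_gen_add cong_gen_sum cong_gen_refl)
    fix i
    assume "i \<in> {..n}"
    then show "J_cong m (Xv (n, trunc_fps m (fps_X ^ i * fps_const (fps_nth f i))))
        (Xv (n - i, fps_const (fps_nth f i)))"
      using J_cong_Xv_trunc_X_power_mult[OF n, of i "fps_const (fps_nth f i)"] by simp
  qed
  finally show ?thesis by simp
qed

lemma J_cong_Xv_of_nat:
  assumes "enat n \<le> m"
  shows "J_cong m (Xv (n, fps_const (of_nat k :: 'k::comm_ring_1))) (of_nat k * (if n = 0 then 1 else 0))"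
proof (induction k)
  case 0
  then show ?case by (simp add: J_cong_Xv_zero)
next
  case (Suc k)
  have "J_cong m (Xv (n, fps_const (of_nat (Suc k) :: 'k))) (Xv (n, 1) + Xv (n, fps_const (of_nat k)))"
    using J_cong_Xv_trunc_add[of m n 1 "fps_const (of_nat k)"] by (simp add: trunc_fps_add flip: fps_const_add)
  also have "J_cong m \<dots> ((if n = 0 then 1 else 0) + of_nat k * (if n = 0 then 1 else 0))"
    by (rule cong_gen_add[OF _ Suc.IH]) (use J_cong_Xv_trunc_X_power[OF assms, of 0] in simp)
  finally show ?case
    by (simp add: algebra_simps)
qed

lemma hs_map_fps_const_surjective_mod_J:
  "\<exists>P. Q - hs_map m type_ring fps_const P \<in> (J_ideal m :: (nat \<times> 'k::comm_ring_1 fps) zpoly set)"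
proof -
  define w :: "nat \<times> 'k fps \<Rightarrow> (nat \<times> 'k) zpoly" where
    "w = (\<lambda>(n, a). if enat n \<le> m \<and> a \<in> carrier (A_ring m) then \<Sum>i\<le>n. Xv (n - i, fps_nth a i) else 0)"
  have "J_cong m (Xv v) (hs_map m type_ring fps_const (w v))" for v
  proof (cases v)
    case (Pair n a)
    show ?thesis
    proof (cases "enat n \<le> m \<and> a \<in> carrier (A_ring m)")
      case True
      then have "hs_map m type_ring fps_const (w v) = (\<Sum>i\<le>n. Xv (n - i, fps_const (fps_nth a i)))"
        using Pair enat_le_trans[of _ n m] by (simp add: w_def hs_map_def peval_sum)
      then show ?thesis
        using J_cong_Xv_trunc_coeffs[of n m a] True Pair by (simp add: A_ring_carrier_iff)
    next
      case False
      then show ?thesis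
        using J_cong_Xv_out_of_range[OF False] Pair by (simp add: w_def hs_map_def False)
    qed
  qed
  then have "J_cong m (peval Xv Q) (peval (\<lambda>v. hs_map m type_ring fps_const (w v)) Q)"
    by (rule cong_gen_peval)
  then have "Q - hs_map m type_ring fps_const (peval w Q) \<in> J_ideal m"
    by (simp add: hs_map_def peval_peval cong_gen_def J_ideal_def)
  then show ?thesis ..
qed

lemma J_cong_of_nat_char:
  assumes "of_nat p = (0 :: 'k::comm_ring_1)"
  shows "J_cong m (of_nat p :: (nat \<times> 'k fps) zpoly) 0"
proof -
  have "J_cong m (Xv (0, fps_const (of_nat p :: 'k))) (of_nat p)"
    using J_cong_Xv_of_nat[of 0 m p] by (simp add: zero_enat_def[symmetric])
  then show ?thesis
    using assms J_cong_Xv_zero cong_gen_sym cong_gen_trans by fastforce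
qed

lemma J_cong_Xv_O_to_A:
  assumes n: "enat n \<le> m" and a: "a \<in> carrier (O_ring p m)"
  shows "J_cong m (Xv (n, O_to_A a :: 'k::comm_ring_1 fps)) (of_int (fps_nth a n))"
proof -
  have nonneg: "fps_nth a i \<ge> 0" for i
    using a by (simp add: O_ring_def)
  have "trunc_fps m (O_to_A a :: 'k fps) = O_to_A a"
    using a by (simp add: O_ring_def O_to_A_def fps_eq_iff)
  then have "J_cong m (Xv (n, O_to_A a :: 'k fps)) (\<Sum>i\<le>n. Xv (n - i, fps_const (of_int (fps_nth a i))))"
    using J_cong_Xv_trunc_coeffs[OF n, of "O_to_A a :: 'k fps"] by (simp add: O_to_A_def)
  also have "J_cong m \<dots> (\<Sum>i\<le>n. of_nat (nat (fps_nth a i)) * (if n - i = 0 then 1 else 0))"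
  proof (rule cong_gen_sum)
    fix i
    assume "i \<in> {..n}"
    then have "enat (n - i) \<le> m"
      using n enat_le_trans[of "n - i" n m] by simp
    then show "J_cong m (Xv (n - i, fps_const (of_int (fps_nth a i) :: 'k)))
        (of_nat (nat (fps_nth a i)) * (if n - i = 0 then 1 else 0))"
      using J_cong_Xv_of_nat[of "n - i" m "nat (fps_nth a i)", where 'k = 'k] nonneg[of i] by simp
  qed
  also have "(\<Sum>i\<le>n. of_nat (nat (fps_nth a i)) * (if n - i = 0 then 1 else 0)) =
      (\<Sum>i\<le>n. if i = n then of_int (fps_nth a n) else (0 :: (nat \<times> 'k fps) zpoly))"
    using nonneg by (intro sum.cong) auto
  finally show ?thesis
    by simp
qed

lemma hs_map_O_to_A_cong_eps:
  assumes "of_nat p = (0 :: 'k::comm_ring_1)"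
  shows "hs_map m (O_ring p m) (O_to_A :: int fps \<Rightarrow> 'k fps) P - of_int (HS_O_eps p m P) \<in> J_ideal m"
proof -
  define \<epsilon> where "\<epsilon> = (\<lambda>(n, a). if enat n \<le> m \<and> a \<in> carrier (O_ring p m) then fps_nth a n else (0::int))"
  define x where "x = peval \<epsilon> P"
  have "J_cong m ((\<lambda>(n, a). if enat n \<le> m \<and> a \<in> carrier (O_ring p m) then Xv (n, O_to_A a :: 'k fps) else 0) v)
      (of_int (\<epsilon> v))" for v
    using J_cong_Xv_O_to_A[where 'k = 'k] by (cases v) (auto simp: \<epsilon>_def)
  then have "J_cong m (hs_map m (O_ring p m) (O_to_A :: int fps \<Rightarrow> 'k fps) P) (of_int x)"
    unfolding hs_map_def x_def peval_of_int_comp[symmetric] by (rule cong_gen_peval)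
  also have "J_cong m (of_int x :: (nat \<times> 'k fps) zpoly) (of_int (x mod int p))"
  proof -
    have "(of_int x :: (nat \<times> 'k fps) zpoly) - of_int (x mod int p) = of_nat p * of_int (x div int p)"
      by (metis minus_mod_eq_mult_div of_int_diff of_int_mult of_int_of_nat_eq)
    moreover have "J_cong m ((of_nat p :: (nat \<times> 'k fps) zpoly) * of_int (x div int p)) (0 * of_int (x div int p))"
      using J_cong_of_nat_char[OF assms] cong_gen_refl by (rule cong_gen_mult)
    ultimately show ?thesis
      unfolding cong_gen_def by simp
  qed
  finally show ?thesis
    by (simp add: cong_gen_def J_ideal_def HS_O_eps_def x_def \<epsilon>_def)
qed

lemma J_ideal_pushout:
  fixes \<tau> :: "(nat \<times> 'k::comm_ring_1 fps) \<Rightarrow> 'r::comm_ring_1"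
  assumes p: "prime p"
    and HS: "\<forall>Q \<in> HS_ideal m (A_ring m :: 'k fps ring). peval \<tau> Q = 0"
    and eps: "\<forall>P. peval \<tau> (hs_map m (O_ring p m) (O_to_A :: int fps \<Rightarrow> 'k fps) P) = of_int (HS_O_eps p m P)"
    and Q: "Q \<in> (J_ideal m :: (nat \<times> 'k fps) zpoly set)"
  shows "peval \<tau> Q = 0"
  using Q unfolding J_ideal_def
proof (rule peval_gen_ideal_eq_0)
  fix s :: "(nat \<times> 'k fps) zpoly"
  assume "s \<in> J_rels m"
  then show "peval \<tau> s = 0"
  proof
    assume "s \<in> HS_rels m (A_ring m)"
    then show ?thesis
      using HS unfolding HS_ideal_def gen_ideal_eq_span by (simp add: module_over_itself.span_base)
  next
    assume "s \<in> J_gens m"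
    then obtain n i where n: "enat n \<le> m"
      and s: "s = Xv (n, trunc_fps m (fps_X ^ i)) - (if n = i then 1 else 0)"
      unfolding J_gens_def by blast
    define a :: "int fps" where "a = trunc_fps m (fps_X ^ i)"
    have p1: "int p > 1"
      using prime_gt_1_nat[OF p] by simp
    then have a_O: "a \<in> carrier (O_ring p m)"
      by (auto simp: O_ring_def a_def)
    have "O_to_A a = (trunc_fps m (fps_X ^ i) :: 'k fps)"
      by (simp add: O_to_A_def a_def fps_eq_iff)
    then have "peval \<tau> (Xv (n, trunc_fps m (fps_X ^ i))) = of_int (HS_O_eps p m (Xv (n, a)))"
      using eps[rule_format, of "Xv (n, a)"] a_O n by simp
    also have "HS_O_eps p m (Xv (n, a)) = (if n = i then 1 else 0)"
      using a_O n p1 by (simp add: HS_O_eps_def a_def)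
    finally show ?thesis
      using s by (simp add: peval_diff)
  qed
qed

theorem proposition6p2:
  fixes p :: nat and m :: enat
  assumes "prime p" and "of_nat p = (0::'k::comm_ring_1)"
  defines "\<iota> \<equiv> hs_map m (type_ring :: 'k ring) (\<lambda>c. fps_const c)"
      and "\<iota>O \<equiv> hs_map m (O_ring p m) (O_to_A :: int fps \<Rightarrow> 'k fps)"
  shows
    \<comment> \<open>iota is injective\<close>
    "(\<forall>P. \<iota> P \<in> HS_ideal m (A_ring m :: 'k fps ring) \<longrightarrow> P \<in> HS_ideal m (type_ring :: 'k ring))
     \<comment> \<open>rho is surjective\<close>
     \<and> (\<forall>Q. \<exists>P. Q - \<iota> P \<in> (J_ideal m :: (nat \<times> 'k fps) zpoly set))
     \<comment> \<open>HS^m(A)/J with the quotient map is the tensor product HS^m(A) \<otimes>_{HS^m(O_m)} F_p: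
         the square commutes ...\<close>
     \<and> (\<forall>P. \<iota>O P - of_int (HS_O_eps p m P) \<in> (J_ideal m :: (nat \<times> 'k fps) zpoly set))
     \<comment> \<open>... and it is a pushout: every ring map f from HS^m(A) to a commutative ring S with
         f o (HS^m(O_m) -> HS^m(A)) = g o eps (g : F_p -> S) factors (uniquely) through HS^m(A)/J\<close>
     \<and> (\<forall>\<tau> :: (nat \<times> 'k fps) \<Rightarrow> 'r::comm_ring_1.
          (\<forall>Q \<in> HS_ideal m (A_ring m :: 'k fps ring). peval \<tau> Q = 0) \<longrightarrow>
          (\<forall>P. peval \<tau> (\<iota>O P) = of_int (HS_O_eps p m P)) \<longrightarrow>
          (\<forall>Q \<in> (J_ideal m :: (nat \<times> 'k fps) zpoly set). peval \<tau> Q = 0))"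
  unfolding \<iota>_def \<iota>O_def
  using hs_map_fps_const_injective hs_map_fps_const_surjective_mod_J
    hs_map_O_to_A_cong_eps[OF assms(2)] J_ideal_pushout[OF assms(1)]
  by blast

end
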